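(* $\bigcup_{\sigma>0}\mathcal{C}(\sigma)\subsetneqq C^\infty([0,L]^2;\mathbb{R}^2)\cap H$.
   Context: $H$ is the closure in $L^2([0,L]^2)^2$ of the $\mathbb{R}^2$-valued $[0,L]^2$-periodic trigonometric polynomials $v$ with $\nabla\cdot v=0$ and $\int v\,dx=0$, with norm $|\cdot|$; $A=-\Delta$ is the Stokes operator with spectrally defined powers $A^{\alpha/2}$. Fix $\nu>0$ and $\kappa_0=2\pi/L$. For $\sigma>0$, $\mathcal{C}(\sigma)$ is the set of $u\in C^\infty([0,L]^2)\cap H$ for which there is $c_0=c_0(u)\in\mathbb{R}$ with $\frac{|A^{\alpha/2}u|^2}{\nu^2\kappa_0^{2\alpha}}\le c_0e^{\sigma\alpha^2}$ for all $\alpha\in\mathbb{N}$. *)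

theory Defs
  imports "HOL-Analysis.Analysis"
begin

inductive_set partials :: "(real^2 \<Rightarrow> real) \<Rightarrow> (real^2 \<Rightarrow> real) set" for f where
  base: "f \<in> partials f"
| step: "g \<in> partials f \<Longrightarrow>
         (\<And>x. ((\<lambda>t. g (x + t *\<^sub>R axis i 1)) has_real_derivative h x) (at 0))
         \<Longrightarrow> h \<in> partials f"

definition smooth_fun :: "(real^2 \<Rightarrow> real) \<Rightarrow> bool" where
  "smooth_fun f \<longleftrightarrow> (\<forall>g\<in>partials f. continuous_on UNIV g \<and>
      (\<forall>i x. \<exists>d. ((\<lambda>t. g (x + t *\<^sub>R axis i 1)) has_real_derivative d) (at 0)))"

definition periodic_field :: "real \<Rightarrow> (real^2 \<Rightarrow> real^2) \<Rightarrow> bool" where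
  "periodic_field L u \<longleftrightarrow> (\<forall>x i. u (x + L *\<^sub>R axis i 1) = u x)"

definition smooth_periodic_field :: "real \<Rightarrow> (real^2 \<Rightarrow> real^2) \<Rightarrow> bool" where
  "smooth_periodic_field L u \<longleftrightarrow> periodic_field L u \<and> (\<forall>j. smooth_fun (\<lambda>x. u x $ j))"

definition kappa0 :: "real \<Rightarrow> real" where
  "kappa0 L = 2 * pi / L"

definition wavevec :: "int \<times> int \<Rightarrow> real^2" where
  "wavevec k = vector [real_of_int (fst k), real_of_int (snd k)]"

definition fcoef :: "real \<Rightarrow> (real^2 \<Rightarrow> real^2) \<Rightarrow> 2 \<Rightarrow> int \<times> int \<Rightarrow> complex" where
  "fcoef L u j k = complex_of_real (1 / L^2) *
     integral (cbox (0::real^2) (\<chi> i. L))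
       (\<lambda>x. complex_of_real (u x $ j) * cis (- kappa0 L * (wavevec k \<bullet> x)))"

text \<open>Membership in H (closure in L^2 of divergence-free, mean-zero trigonometric
  polynomials), expressed via Fourier coefficients: zero mean and k . u_hat(k) = 0.\<close>
definition in_H :: "real \<Rightarrow> (real^2 \<Rightarrow> real^2) \<Rightarrow> bool" where
  "in_H L u \<longleftrightarrow> (\<forall>j. fcoef L u j (0,0) = 0) \<and>
     (\<forall>k. complex_of_real (real_of_int (fst k)) * fcoef L u 1 k
          + complex_of_real (real_of_int (snd k)) * fcoef L u 2 k = 0)"

definition smoothH :: "real \<Rightarrow> (real^2 \<Rightarrow> real^2) set" where
  "smoothH L = {u. smooth_periodic_field L u \<and> in_H L u}"

text \<open>|A^{alpha/2} u|^2 with A = -Laplacian defined spectrally; by Parseval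
  |A^{alpha/2}u|^2 = L^2 * sum_k (kappa0^2 |k|^2)^alpha * |u_hat(k)|^2.\<close>
definition Apow_norm_sq :: "real \<Rightarrow> nat \<Rightarrow> (real^2 \<Rightarrow> real^2) \<Rightarrow> real" where
  "Apow_norm_sq L \<alpha> u = L^2 * (\<Sum>\<^sub>\<infinity>k\<in>(UNIV :: (int\<times>int) set).
      (kappa0 L * norm (wavevec k)) ^ (2 * \<alpha>) *
      (\<Sum>j\<in>UNIV. (cmod (fcoef L u j k))^2))"

definition Cclass :: "real \<Rightarrow> real \<Rightarrow> real \<Rightarrow> (real^2 \<Rightarrow> real^2) set" where
  "Cclass L \<nu> \<sigma> = {u \<in> smoothH L. \<exists>c0::real. \<forall>\<alpha>::nat.
      Apow_norm_sq L \<alpha> u / (\<nu>^2 * kappa0 L ^ (2 * \<alpha>))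
        \<le> c0 * exp (\<sigma> * (real \<alpha>)^2)}"

end

theory Submission
  imports Defs
begin

text \<open>
  The witness is the shear flow u(x) = (0, f(x$1)) with f(t) = \<Sum>n. b n cos (\<kappa>0 n t) and
  b n = exp (- (ln n)^(3/2)). Since u depends on x$1 alone and b 0 = 0, its Fourier coefficients
  vanish off the axis k = (m, 0) and at the origin, so u lies in H; since b decays faster than every
  power of n, all derivatives of the series converge uniformly and u is smooth. Parseval bounds
  |A^(\<alpha>/2) u|^2 below by a single mode, L^2 (\<kappa>0 n)^(2\<alpha>) (b n / 2)^2. Along \<alpha> = 2m,
  n = 2^(m^2) this is \<kappa>0^(2\<alpha>) L^2/4 exp (a m^3) with a = 2 ln 2 (2 - sqrt (ln 2)) > 0,
  which outgrows c0 exp (\<sigma> \<alpha>^2) = c0 exp (4 \<sigma> m^2) for every \<sigma>.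
\<close>

definition rapid_decay :: "(nat \<Rightarrow> real) \<Rightarrow> bool" where
  "rapid_decay b \<longleftrightarrow> (\<forall>p. summable (\<lambda>n. \<bar>b n\<bar> * real n ^ p))"

definition decay_coeff :: "nat \<Rightarrow> real" where
  "decay_coeff n = (if n = 0 then 0 else exp (- ln (real n) * sqrt (ln (real n))))"

lemma decay_coeff_nonneg: "decay_coeff n \<ge> 0"
  by (simp add: decay_coeff_def)

lemma decay_coeff_times_power_le:
  assumes "real n \<ge> exp ((real p + 2)^2)"
  shows "decay_coeff n * real n ^ p \<le> 1 / real n ^ 2"
proof -
  have n_pos: "real n > 0"
    using assms by (smt (verit) exp_gt_zero)
  have "ln (real n) \<ge> (real p + 2)^2"
    using assms n_pos by (metis exp_gt_zero ln_exp ln_le_cancel_iff)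
  then have "sqrt (ln (real n)) \<ge> real p + 2"
    by (metis abs_of_nonneg add_nonneg_nonneg of_nat_0_le_iff real_sqrt_abs
        real_sqrt_le_mono zero_le_numeral)
  moreover have "ln (real n) \<ge> 0"
    using assms n_pos by (smt (verit) ln_ge_zero one_le_exp_iff zero_le_power2)
  ultimately have exponent: "ln (real n) * (real p + 2) \<le> ln (real n) * sqrt (ln (real n))"
    by (intro mult_left_mono)
  have "real n ^ p = exp (real p * ln (real n))"
    using n_pos by (simp add: exp_of_nat_mult)
  then have "decay_coeff n * real n ^ p = exp (- ln (real n) * sqrt (ln (real n)) + real p * ln (real n))"
    using n_pos by (simp add: decay_coeff_def mult_exp_exp)
  also have "\<dots> \<le> exp (- 2 * ln (real n))"
    using exponent by (simp add: algebra_simps)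
  also have "\<dots> = 1 / real n ^ 2"
    using n_pos exp_of_nat_mult[of 2 "ln (real n)"] by (simp add: exp_minus field_simps)
  finally show ?thesis .
qed

lemma rapid_decay_decay_coeff: "rapid_decay decay_coeff"
  unfolding rapid_decay_def
proof
  fix p :: nat
  obtain N :: nat where N: "real N \<ge> exp ((real p + 2)^2)"
    using real_arch_simple by blast
  have "\<forall>\<^sub>F n in sequentially. norm (\<bar>decay_coeff n\<bar> * real n ^ p) \<le> 1 / real n ^ 2"
    unfolding eventually_sequentially
  proof (intro exI allI impI)
    fix n assume "N \<le> n"
    then have "real n \<ge> exp ((real p + 2)^2)"
      using N of_nat_mono by (blast intro: order.trans)
    then show "norm (\<bar>decay_coeff n\<bar> * real n ^ p) \<le> 1 / real n ^ 2"
      using decay_coeff_times_power_le decay_coeff_nonneg by simp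
  qed
  moreover have "summable (\<lambda>n. 1 / real n ^ 2)"
    using inverse_power_summable[of 2] by (simp add: divide_inverse)
  ultimately show "summable (\<lambda>n. \<bar>decay_coeff n\<bar> * real n ^ p)"
    by (rule summable_comparison_test_ev)
qed

lemma rapid_decay_bounded:
  assumes "rapid_decay b"
  obtains B where "B > 0" and "\<And>n. \<bar>b n\<bar> \<le> B"
proof -
  have "summable (\<lambda>n. \<bar>b n\<bar> * real n ^ 0)"
    using assms unfolding rapid_decay_def by blast
  then have "Bseq (\<lambda>n. \<bar>b n\<bar>)"
    by (simp add: summable_imp_Bseq)
  then show ?thesis
    using that by (elim BseqE) auto
qed

text \<open>The phase shift p pi / 2 makes cos_mode b c p n the p-th derivative of
  t \<mapsto> b n cos (c n t), so cos_series b c p is the p-th derivative of cos_series b c 0.\<close>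
definition cos_mode :: "(nat \<Rightarrow> real) \<Rightarrow> real \<Rightarrow> nat \<Rightarrow> nat \<Rightarrow> real \<Rightarrow> real" where
  "cos_mode b c p n t = b n * (c * real n) ^ p * cos (c * real n * t + real p * pi / 2)"

definition cos_series :: "(nat \<Rightarrow> real) \<Rightarrow> real \<Rightarrow> nat \<Rightarrow> real \<Rightarrow> real" where
  "cos_series b c p t = (\<Sum>n. cos_mode b c p n t)"

lemma cos_mode_bound: "\<bar>cos_mode b c p n t\<bar> \<le> \<bar>c\<bar> ^ p * (\<bar>b n\<bar> * real n ^ p)"
proof -
  have "\<bar>cos (c * real n * t + real p * pi / 2)\<bar> \<le> 1" by simp
  then have "\<bar>b n\<bar> * (\<bar>c\<bar> * real n) ^ p * \<bar>cos (c * real n * t + real p * pi / 2)\<bar>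
      \<le> \<bar>b n\<bar> * (\<bar>c\<bar> * real n) ^ p"
    by (intro mult_left_le) auto
  then show ?thesis
    by (simp add: cos_mode_def abs_mult power_abs power_mult_distrib mult_ac)
qed

lemma summable_cos_mode_majorant:
  assumes "rapid_decay b"
  shows "summable (\<lambda>n. \<bar>c\<bar> ^ p * (\<bar>b n\<bar> * real n ^ p))"
  using assms by (simp add: rapid_decay_def summable_mult)

lemma summable_cos_mode:
  assumes "rapid_decay b"
  shows "summable (\<lambda>n. cos_mode b c p n t)"
  by (rule summable_rabs_cancel,
      rule summable_comparison_test[OF _ summable_cos_mode_majorant[OF assms, of c p]])
     (use cos_mode_bound in auto)

lemma cos_mode_deriv: "(cos_mode b c p n has_real_derivative cos_mode b c (Suc p) n t) (at t)"
proof -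
  have "c * real n * t + real (Suc p) * pi / 2 = (c * real n * t + real p * pi / 2) + pi / 2"
    by (simp add: field_simps)
  then have "cos (c * real n * t + real (Suc p) * pi / 2) = - sin (c * real n * t + real p * pi / 2)"
    by (simp only: cos_add) simp
  then show ?thesis
    unfolding cos_mode_def[abs_def] by (auto intro!: derivative_eq_intros simp: algebra_simps)
qed

lemma cos_series_deriv:
  assumes "rapid_decay b"
  shows "(cos_series b c p has_real_derivative cos_series b c (Suc p) t) (at t)"
proof -
  have uniform: "uniformly_convergent_on UNIV (\<lambda>N t. \<Sum>n<N. cos_mode b c (Suc p) n t)"
    by (rule Weierstrass_m_test'_ev[OF always_eventually summable_cos_mode_majorant[OF assms]])
       (use cos_mode_bound in auto)
  have "((\<lambda>t. \<Sum>n. cos_mode b c p n t) has_field_derivative (\<Sum>n. cos_mode b c (Suc p) n t)) (at t)"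
  proof (rule has_field_derivative_series'(2)[OF convex_UNIV _ uniform])
    show "(cos_mode b c p n has_field_derivative cos_mode b c (Suc p) n x) (at x within UNIV)" for n x
      by (rule cos_mode_deriv)
    show "summable (\<lambda>n. cos_mode b c p n 0)"
      by (rule summable_cos_mode[OF assms])
  qed auto
  then show ?thesis
    unfolding cos_series_def[abs_def] .
qed

lemma cos_series_periodic:
  assumes "c * L = 2 * pi"
  shows "cos_series b c p (t + L) = cos_series b c p t"
proof -
  have "cos (c * real n * (t + L) + real p * pi / 2) = cos (c * real n * t + real p * pi / 2)" for n
  proof -
    have "c * real n * (t + L) + real p * pi / 2 = (c * real n * t + real p * pi / 2) + 2 * real n * pi"
      using assms by (simp add: algebra_simps)
    then show ?thesis
      by (simp only: cos_add cos_2npi sin_2npi) simp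
  qed
  then show ?thesis
    unfolding cos_series_def cos_mode_def by simp
qed

lemma first_coordinate_directional_deriv:
  assumes "(f has_real_derivative f' (x $ 1)) (at (x $ 1))"
  shows "((\<lambda>t. f ((x + t *\<^sub>R axis i 1) $ 1)) has_real_derivative
            (if i = 1 then f' (x $ 1) else 0)) (at 0)"
proof (cases "i = 1")
  case True
  have "((\<lambda>t. f (x $ 1 + t)) has_real_derivative f' (x $ 1 + 0) * 1) (at 0)"
    by (rule DERIV_chain2[of f]) (use assms in \<open>auto intro!: derivative_eq_intros\<close>)
  then show ?thesis
    using True by (simp add: axis_def)
next
  case False
  then show ?thesis
    by (simp add: axis_def)
qed

lemma smooth_fun_of_closed_family:
  assumes "f \<in> S"
    and closed: "\<And>g h i. g \<in> S \<Longrightarrow>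
           (\<And>x. ((\<lambda>t. g (x + t *\<^sub>R axis i 1)) has_real_derivative h x) (at 0)) \<Longrightarrow> h \<in> S"
    and regular: "\<And>g. g \<in> S \<Longrightarrow> continuous_on UNIV g \<and>
           (\<forall>i x. \<exists>d. ((\<lambda>t. g (x + t *\<^sub>R axis i 1)) has_real_derivative d) (at 0))"
  shows "smooth_fun f"
proof -
  have "g \<in> S" if "g \<in> partials f" for g
    using that by (induction rule: partials.induct) (use assms in blast)+
  then show ?thesis
    unfolding smooth_fun_def using regular by blast
qed

definition first_coordinate_family :: "(nat \<Rightarrow> real \<Rightarrow> real) \<Rightarrow> (real^2 \<Rightarrow> real) set" where
  "first_coordinate_family F = insert (\<lambda>x. 0) (range (\<lambda>p x. F p (x $ 1)))"

lemma first_coordinate_family_cases: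
  assumes "g \<in> first_coordinate_family F"
  obtains p where "g = (\<lambda>x. F p (x $ 1))" | "g = (\<lambda>x. 0)"
  using assms unfolding first_coordinate_family_def by blast

lemma first_coordinate_family_closed:
  assumes deriv: "\<And>p t. (F p has_real_derivative F (Suc p) t) (at t)"
    and "g \<in> first_coordinate_family F"
    and h: "\<And>x. ((\<lambda>t. g (x + t *\<^sub>R axis i 1)) has_real_derivative h x) (at 0)"
  shows "h \<in> first_coordinate_family F"
  using \<open>g \<in> first_coordinate_family F\<close>
proof (cases rule: first_coordinate_family_cases)
  case (1 p)
  have "h x = (if i = 1 then F (Suc p) (x $ 1) else 0)" for x
    using DERIV_unique[OF h[of x, unfolded 1]
        first_coordinate_directional_deriv[of "F p" "F (Suc p)", OF deriv]] .
  then have "h = (if i = 1 then (\<lambda>x. F (Suc p) (x $ 1)) else (\<lambda>x. 0))"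
    by auto
  then show ?thesis
    unfolding first_coordinate_family_def by simp
next
  case 2
  have "h x = 0" for x
    using DERIV_unique[OF h[of x, unfolded 2] DERIV_const] by simp
  then have "h = (\<lambda>x. 0)"
    by auto
  then show ?thesis
    unfolding first_coordinate_family_def by simp
qed

lemma first_coordinate_family_regular:
  assumes deriv: "\<And>p t. (F p has_real_derivative F (Suc p) t) (at t)"
    and "g \<in> first_coordinate_family F"
  shows "continuous_on UNIV g \<and>
      (\<forall>i x. \<exists>d. ((\<lambda>t. g (x + t *\<^sub>R axis i 1)) has_real_derivative d) (at 0))"
  using \<open>g \<in> first_coordinate_family F\<close>
proof (cases rule: first_coordinate_family_cases)
  case (1 p)
  have "continuous_on UNIV (F p)"
    using deriv by (meson DERIV_isCont continuous_at_imp_continuous_on)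
  then have "continuous_on UNIV (\<lambda>x::real^2. F p (x $ 1))"
    by (rule continuous_on_compose2) (auto intro: continuous_intros)
  then show ?thesis
    using 1 first_coordinate_directional_deriv[of "F p" "F (Suc p)", OF deriv] by blast
next
  case 2
  then show ?thesis
    by (auto intro!: exI[of _ 0] DERIV_const)
qed

lemma smooth_fun_first_coordinate:
  assumes "\<And>p t. (F p has_real_derivative F (Suc p) t) (at t)"
  shows "smooth_fun (\<lambda>x::real^2. F p (x $ 1))"
proof (rule smooth_fun_of_closed_family[of _ "first_coordinate_family F"])
  show "(\<lambda>x. F p (x $ 1)) \<in> first_coordinate_family F"
    by (simp add: first_coordinate_family_def)
qed (use first_coordinate_family_closed[of F, OF assms] first_coordinate_family_regular[of F, OF assms]
      in blast)+

lemma has_integral_cis_period: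
  fixes m :: int
  assumes "L > 0" and period: "c * L = 2 * pi"
  shows "((\<lambda>x. cis (c * of_int m * x)) has_integral (if m = 0 then complex_of_real L else 0)) {0..L}"
proof (cases "m = 0")
  case True
  then show ?thesis
    using has_integral_const_real[of "1::complex" 0 L] assms by (simp add: scaleR_conv_of_real)
next
  case False
  define a where "a = \<i> * complex_of_real (c * of_int m)"
  have "a \<noteq> 0"
    using False period by (auto simp: a_def)
  have "a * complex_of_real L = \<i> * complex_of_real (2 * pi * of_int m)"
    using period by (simp add: a_def algebra_simps flip: of_real_mult)
  then have "exp (a * complex_of_real L) = cis (2 * pi * of_int m)"
    by (simp add: cis_conv_exp)
  then have "integral {0..L} (\<lambda>x. exp (a * complex_of_real x)) = 0"
    using Kronecker_Approximation_Theorem.integral_exp[OF _ \<open>a \<noteq> 0\<close>, of L] assms by simp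
  moreover have "(\<lambda>x. exp (a * complex_of_real x)) integrable_on {0..L}"
    by (intro integrable_continuous_interval continuous_intros)
  moreover have "cis (c * of_int m * x) = exp (a * complex_of_real x)" for x
    by (simp add: a_def cis_conv_exp mult.assoc)
  ultimately show ?thesis
    using False by (simp add: has_integral_integral)
qed

lemma has_integral_cos_cis_period:
  fixes m :: int
  assumes "L > 0" and "c * L = 2 * pi"
  shows "((\<lambda>x. complex_of_real (cos (c * real n * x)) * cis (c * of_int m * x)) has_integral
           (if n = nat \<bar>m\<bar> then complex_of_real (if m = 0 then L else L / 2) else 0)) {0..L}"
proof -
  have cos_cis: "complex_of_real (cos t) = (cis t + cis (- t)) / 2" for t
    by (simp add: complex_eq_iff)
  have integrand: "(\<lambda>x. complex_of_real (cos (c * real n * x)) * cis (c * of_int m * x))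
      = (\<lambda>x. (cis (c * of_int (int n + m) * x) + cis (c * of_int (m - int n) * x)) / 2)"
    by (simp add: fun_eq_iff cos_cis cis_mult add_divide_distrib algebra_simps)
  have "(if n = nat \<bar>m\<bar> then complex_of_real (if m = 0 then L else L / 2) else 0)
      = ((if int n + m = 0 then complex_of_real L else 0)
         + (if m - int n = 0 then complex_of_real L else 0)) / 2"
    by (cases "m \<ge> 0") auto
  then show ?thesis
    unfolding integrand by (simp only:) (intro has_integral_divide has_integral_add has_integral_cis_period assms)
qed

lemma has_integral_suminf_uniform:
  fixes f :: "nat \<Rightarrow> real \<Rightarrow> 'a::banach"
  assumes uniform: "uniform_limit {a..b} (\<lambda>N x. \<Sum>n<N. f n x) (\<lambda>x. \<Sum>n. f n x) sequentially"
    and cont: "\<And>n. continuous_on {a..b} (f n)"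
    and integral: "\<And>n. (f n has_integral I n) {a..b}"
  obtains J where "I sums J" and "((\<lambda>x. \<Sum>n. f n x) has_integral J) {a..b}"
proof -
  obtain J K where
      J: "\<And>N. ((\<lambda>x. \<Sum>n<N. f n x) has_integral J N) {a..b}"
      and K: "((\<lambda>x. \<Sum>n. f n x) has_integral K) {a..b}" and "J \<longlonglongrightarrow> K"
    by (rule uniform_limit_integral[OF uniform]) (auto intro: cont continuous_intros)
  moreover have "J = (\<lambda>N. \<Sum>n<N. I n)"
    using has_integral_unique[OF J has_integral_sum[OF _ integral]] by auto
  ultimately show ?thesis
    using that by (simp add: sums_def)
qed

lemma cos_series_fourier_coeff:
  fixes m :: int
  assumes decay: "rapid_decay b" and "L > 0" and "c * L = 2 * pi"
  shows "((\<lambda>x. complex_of_real (cos_series b c 0 x) * cis (c * of_int m * x)) has_integral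
           complex_of_real (b (nat \<bar>m\<bar>) * (if m = 0 then L else L / 2))) {0..L}"
proof -
  define f where "f n x = complex_of_real (cos_mode b c 0 n x) * cis (c * of_int m * x)" for n x
  define I where "I n = (if n = nat \<bar>m\<bar> then complex_of_real (b n * (if m = 0 then L else L / 2))
                         else 0)" for n
  have f_integral: "(f n has_integral I n) {0..L}" for n
  proof -
    have "f n = (\<lambda>x. complex_of_real (b n) *
                     (complex_of_real (cos (c * real n * x)) * cis (c * of_int m * x)))"
      by (simp add: f_def cos_mode_def fun_eq_iff)
    moreover have "I n = complex_of_real (b n) *
                     (if n = nat \<bar>m\<bar> then complex_of_real (if m = 0 then L else L / 2) else 0)"
      by (simp add: I_def)
    ultimately show ?thesis
      using has_integral_mult_right[OF has_integral_cos_cis_period[OF assms(2,3)]] by simp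
  qed
  have "uniform_limit {0..L} (\<lambda>N x. \<Sum>n<N. f n x) (\<lambda>x. \<Sum>n. f n x) sequentially"
    using summable_cos_mode_majorant[OF decay, of c 0] cos_mode_bound[of b c 0]
    by (intro Weierstrass_m_test[where M = "\<lambda>n. \<bar>b n\<bar>"]) (auto simp: f_def norm_mult)
  then obtain J where "I sums J" and J: "((\<lambda>x. \<Sum>n. f n x) has_integral J) {0..L}"
    by (rule has_integral_suminf_uniform[OF _ _ f_integral])
       (auto simp: f_def cos_mode_def intro!: continuous_intros)
  moreover have "I sums complex_of_real (b (nat \<bar>m\<bar>) * (if m = 0 then L else L / 2))"
    unfolding I_def by (rule sums_single)
  ultimately have "J = complex_of_real (b (nat \<bar>m\<bar>) * (if m = 0 then L else L / 2))"
    using sums_unique2 by blast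
  moreover have "(\<Sum>n. f n x) = complex_of_real (cos_series b c 0 x) * cis (c * of_int m * x)" for x
    using summable_cos_mode[OF decay, of c 0 x]
    by (simp add: f_def cos_series_def suminf_mult2 suminf_of_real summable_of_real)
  ultimately show ?thesis
    using J by simp
qed

lemma cbox_vector_2:
  "cbox (vector [a, b]) (vector [c, d] :: real^2) = {z. (z $ 1, z $ 2) \<in> cbox (a, b) (c, d)}"
  by (auto simp: cbox_Pair_eq mem_box_cart forall_2)

lemma content_cbox_vector_2:
  "measure lborel (cbox (vector [a, b]) (vector [c, d] :: real^2)) = measure lborel (cbox (a, b) (c, d))"
proof -
  have "(\<exists>i::2. P i) \<longleftrightarrow> P 1 \<or> P 2" for P
    by (metis exhaust_2)
  then have "cbox (vector [a, b]) (vector [c, d] :: real^2) = {} \<longleftrightarrow> c < a \<or> d < b"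
    unfolding interval_eq_empty_cart by simp
  then show ?thesis
    by (simp add: content_cbox_if_cart content_Pair UNIV_2 not_le)
qed

lemma continuous_on_vector_2: "continuous_on UNIV (\<lambda>p::real \<times> real. vector [fst p, snd p] :: real^2)"
proof -
  have vector_2: "(\<lambda>p::real \<times> real. vector [fst p, snd p] :: real^2)
      = (\<lambda>p. fst p *\<^sub>R axis 1 1 + snd p *\<^sub>R axis 2 1)"
    by (simp add: fun_eq_iff vec_eq_iff forall_2 axis_def)
  show ?thesis
    unfolding vector_2 by (intro continuous_intros)
qed

lemma has_integral_vector_2_pair:
  fixes F :: "real^2 \<Rightarrow> 'a::banach"
  assumes "(F has_integral I) (cbox u v)"
  shows "((\<lambda>p. F (vector [fst p, snd p])) has_integral I) (cbox (u $ 1, u $ 2) (v $ 1, v $ 2))"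
proof -
  define g :: "real \<times> real \<Rightarrow> real^2" where "g p = vector [fst p, snd p]" for p
  define h :: "real^2 \<Rightarrow> real \<times> real" where "h z = (z $ 1, z $ 2)" for z
  have hg: "h (g p) = p" and gh: "g (h z) = z" for p z
    by (simp_all add: g_def h_def vec_eq_iff forall_2)
  have g_image: "g ` A = {z. h z \<in> A}" and h_image: "h ` B = {p. g p \<in> B}" for A B
    using hg gh by (auto, metis image_eqI, metis image_eqI)
  have g_cbox: "g ` cbox (a, b) (c, d) = cbox (vector [a, b]) (vector [c, d])" for a b c d
    unfolding g_image cbox_vector_2 h_def ..
  have h_cbox: "h ` cbox u v = cbox (u $ 1, u $ 2) (v $ 1, v $ 2)" for u v
    unfolding h_image g_def by (auto simp: mem_box_cart forall_2 cbox_Pair_eq)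
  have "((\<lambda>p. F (g p)) has_integral (1 / 1) *\<^sub>R I) (h ` cbox u v)"
  proof (rule has_integral_twiddle[OF _ hg gh _ _ _ _ assms])
    show "continuous (at p) g" for p
      using continuous_on_vector_2 continuous_on_eq_continuous_at open_UNIV unfolding g_def by blast
    show "\<exists>w z. g ` cbox u v = cbox w z" for u v
      using g_cbox by (metis prod.collapse)
    show "\<exists>w z. h ` cbox u v = cbox w z" for u v
      using h_cbox by blast
    show "measure lborel (g ` cbox u v) = 1 * measure lborel (cbox u v)" for u v
      using g_cbox content_cbox_vector_2 by (metis mult_1 prod.collapse)
  qed simp
  then show ?thesis
    by (simp add: g_def h_cbox)
qed

lemma integral_square_iterated:
  fixes F :: "real^2 \<Rightarrow> 'a::banach"
  assumes cont: "continuous_on UNIV F"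
  shows "integral (cbox 0 (\<chi> i. L)) F = integral {0..L} (\<lambda>x. integral {0..L} (\<lambda>y. F (vector [x, y])))"
proof -
  have integral: "(F has_integral integral (cbox 0 (\<chi> i. L)) F) (cbox 0 (\<chi> i. L))"
    using cont by (auto intro: integrable_continuous continuous_on_subset)
  have "((\<lambda>p. F (vector [fst p, snd p])) has_integral integral (cbox 0 (\<chi> i. L)) F)
               (cbox (0, 0) (L, L))"
    using has_integral_vector_2_pair[OF integral] by simp
  then have "integral (cbox 0 (\<chi> i. L)) F = integral (cbox (0, 0) (L, L)) (\<lambda>p. F (vector [fst p, snd p]))"
    by (simp add: integral_unique)
  also have "\<dots> = integral (cbox 0 L) (\<lambda>x. integral (cbox 0 L) (\<lambda>y. F (vector [fst (x, y), snd (x, y)])))"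
  proof (rule integral_prod_continuous)
    show "continuous_on (cbox (0, 0) (L, L)) (\<lambda>p. F (vector [fst p, snd p]))"
      using continuous_on_compose[OF continuous_on_vector_2 continuous_on_subset[OF cont]]
      by (auto simp: comp_def intro: continuous_on_subset)
  qed
  finally show ?thesis
    by simp
qed

lemma summable_on_nat_abs:
  fixes g :: "nat \<Rightarrow> real"
  assumes "\<And>n. g n \<ge> 0" and "summable g"
  shows "(\<lambda>m::int. g (nat \<bar>m\<bar>)) summable_on UNIV"
proof -
  have "g summable_on UNIV"
    using assms summable_on_UNIV_nonneg_real_iff by blast
  then have "(\<lambda>m. g (nat \<bar>m\<bar>)) summable_on range int" and "(\<lambda>m. g (nat \<bar>m\<bar>)) summable_on range (\<lambda>n. - int n)"
    by (simp_all add: summable_on_reindex inj_on_def comp_def)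
  then have "(\<lambda>m. g (nat \<bar>m\<bar>)) summable_on (range int \<union> range (\<lambda>n. - int n))"
    by (rule summable_on_union)
  also have "range int \<union> range (\<lambda>n. - int n) = UNIV"
  proof (rule sym, rule UNIV_eq_I)
    fix m :: int
    show "m \<in> range int \<union> range (\<lambda>n. - int n)"
    proof (cases m rule: int_cases)
      case (neg n)
      then have "m = (\<lambda>n. - int n) (Suc n)"
        by simp
      then show ?thesis
        by blast
    qed simp
  qed
  finally show ?thesis .
qed

lemma summable_on_axis:
  fixes g :: "nat \<Rightarrow> real"
  assumes "\<And>n. g n \<ge> 0" and "summable g"
  shows "(\<lambda>k::int \<times> int. if snd k = 0 then g (nat \<bar>fst k\<bar>) else 0) summable_on UNIV"
proof -
  have "(\<lambda>k. if snd k = 0 then g (nat \<bar>fst k\<bar>) else 0) summable_on range (\<lambda>m::int. (m, 0::int))"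
    using summable_on_nat_abs[OF assms] by (simp add: summable_on_reindex inj_on_def comp_def)
  then show ?thesis
    by (rule summable_on_cong_neutral[THEN iffD1, rotated -1]) auto
qed

definition Apow_summand :: "real \<Rightarrow> nat \<Rightarrow> (real^2 \<Rightarrow> real^2) \<Rightarrow> int \<times> int \<Rightarrow> real" where
  "Apow_summand L \<alpha> u k =
     (kappa0 L * norm (wavevec k)) ^ (2 * \<alpha>) * (\<Sum>j\<in>UNIV. (cmod (fcoef L u j k))^2)"

lemma Apow_summand_nonneg:
  assumes "L > 0"
  shows "Apow_summand L \<alpha> u k \<ge> 0"
  using assms by (simp add: Apow_summand_def kappa0_def sum_nonneg)

lemma Apow_summand_le_Apow_norm_sq:
  assumes "L > 0" and "Apow_summand L \<alpha> u summable_on UNIV"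
  shows "L^2 * Apow_summand L \<alpha> u k \<le> Apow_norm_sq L \<alpha> u"
proof -
  have "Apow_summand L \<alpha> u k \<le> infsum (Apow_summand L \<alpha> u) UNIV"
    using finite_sum_le_infsum[of "Apow_summand L \<alpha> u" UNIV "{k}"] assms Apow_summand_nonneg by simp
  moreover have "Apow_norm_sq L \<alpha> u = L^2 * infsum (Apow_summand L \<alpha> u) UNIV"
    unfolding Apow_norm_sq_def Apow_summand_def[abs_def] ..
  ultimately show ?thesis
    by (simp add: mult_left_mono)
qed

definition shear_flow :: "(nat \<Rightarrow> real) \<Rightarrow> real \<Rightarrow> real^2 \<Rightarrow> real^2" where
  "shear_flow b L x = vector [0, cos_series b (kappa0 L) 0 (x $ 1)]"

lemma shear_flow_smooth:
  assumes "rapid_decay b" and "L > 0"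
  shows "smooth_periodic_field L (shear_flow b L)"
proof -
  have "kappa0 L * L = 2 * pi"
    using \<open>L > 0\<close> by (simp add: kappa0_def)
  then have "periodic_field L (shear_flow b L)"
    by (auto simp: periodic_field_def shear_flow_def axis_def cos_series_periodic)
  moreover have "smooth_fun (\<lambda>x. shear_flow b L x $ j)" for j
    using exhaust_2[of j]
  proof (elim disjE)
    assume "j = 1"
    then show ?thesis
      using smooth_fun_first_coordinate[of "\<lambda>_ _. 0" 0] by (simp add: shear_flow_def)
  next
    assume "j = 2"
    then show ?thesis
      using smooth_fun_first_coordinate[of "cos_series b (kappa0 L)", OF cos_series_deriv[OF \<open>rapid_decay b\<close>]]
      by (simp add: shear_flow_def)
  qed
  ultimately show ?thesis
    by (simp add: smooth_periodic_field_def)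
qed

lemma integral_square_first_coordinate:
  assumes L: "L > 0" and period: "c * L = 2 * pi" and cont: "continuous_on UNIV f"
  shows "integral (cbox 0 (\<chi> i. L)) (\<lambda>x. complex_of_real (f (x $ 1)) * cis (- c * (wavevec k \<bullet> x)))
       = integral {0..L} (\<lambda>x. complex_of_real (f x) * cis (c * of_int (- fst k) * x))
         * (if snd k = 0 then complex_of_real L else 0)"
proof -
  define F where "F x = complex_of_real (f (x $ 1)) * cis (- c * (wavevec k \<bullet> x))" for x :: "real^2"
  have "continuous_on UNIV (\<lambda>x::real^2. f (x $ 1))"
    using cont by (rule continuous_on_compose2) (auto intro: continuous_intros)
  then have "continuous_on UNIV F"
    unfolding F_def by (intro continuous_intros)
  have F_vector: "F (vector [x, y]) = (complex_of_real (f x) * cis (c * of_int (- fst k) * x))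
                   * cis (c * of_int (- snd k) * y)" for x y
    by (simp add: F_def wavevec_def inner_vec_def UNIV_2 cis_mult algebra_simps)
  have inner: "integral {0..L} (\<lambda>y. F (vector [x, y]))
      = complex_of_real (f x) * cis (c * of_int (- fst k) * x) * (if snd k = 0 then complex_of_real L else 0)"
    for x
    unfolding F_vector integral_mult_right integral_unique[OF has_integral_cis_period[OF L period]]
    by simp
  show ?thesis
    unfolding F_def[symmetric] integral_square_iterated[OF \<open>continuous_on UNIV F\<close>] inner
      integral_mult_left ..
qed

lemma fcoef_shear_flow:
  assumes decay: "rapid_decay b" and L: "L > 0"
  shows "fcoef L (shear_flow b L) j k =
    (if j = 2 \<and> snd k = 0 then complex_of_real (b (nat \<bar>fst k\<bar>) * (if fst k = 0 then 1 else 1 / 2))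
     else 0)"
  using exhaust_2[of j]
proof (elim disjE)
  assume "j = 1"
  then show ?thesis
    by (simp add: fcoef_def shear_flow_def)
next
  assume "j = 2"
  define c where "c = kappa0 L"
  have period: "c * L = 2 * pi"
    using L by (simp add: c_def kappa0_def)
  have "continuous_on UNIV (cos_series b c 0)"
    using cos_series_deriv[OF decay] by (meson DERIV_isCont continuous_at_imp_continuous_on)
  have "fcoef L (shear_flow b L) j k = complex_of_real (1 / L^2) * integral (cbox 0 (\<chi> i. L))
      (\<lambda>x. complex_of_real (cos_series b c 0 (x $ 1)) * cis (- c * (wavevec k \<bullet> x)))"
    using \<open>j = 2\<close> by (simp add: fcoef_def shear_flow_def c_def)
  also have "\<dots> = complex_of_real (1 / L^2)
        * (integral {0..L} (\<lambda>x. complex_of_real (cos_series b c 0 x) * cis (c * of_int (- fst k) * x))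
           * (if snd k = 0 then complex_of_real L else 0))"
    unfolding integral_square_first_coordinate[OF L period \<open>continuous_on UNIV (cos_series b c 0)\<close>] ..
  also have "\<dots> = complex_of_real (1 / L^2) *
      (if snd k = 0 then complex_of_real (b (nat \<bar>fst k\<bar>) * (if fst k = 0 then L else L / 2) * L) else 0)"
    unfolding integral_unique[OF cos_series_fourier_coeff[OF decay L period]] by simp
  finally show ?thesis
    using \<open>j = 2\<close> L by (simp add: power2_eq_square flip: of_real_mult of_real_divide)
qed

lemma shear_flow_in_smoothH:
  assumes "rapid_decay b" and "b 0 = 0" and "L > 0"
  shows "shear_flow b L \<in> smoothH L"
  using assms by (simp add: smoothH_def in_H_def shear_flow_smooth fcoef_shear_flow)

lemma norm_wavevec_axis: "norm (wavevec (m, 0)) = \<bar>real_of_int m\<bar>"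
  by (simp add: norm_eq_sqrt_inner wavevec_def inner_vec_def UNIV_2)

lemma Apow_summand_shear_flow:
  assumes "rapid_decay b" and "L > 0"
  shows "Apow_summand L \<alpha> (shear_flow b L) k =
    (if snd k = 0
     then (kappa0 L * real (nat \<bar>fst k\<bar>)) ^ (2 * \<alpha>) * (b (nat \<bar>fst k\<bar>) * (if fst k = 0 then 1 else 1 / 2))^2
     else 0)"
proof (cases k)
  case (Pair m m')
  then show ?thesis
    by (cases "m' = 0")
       (simp_all add: Apow_summand_def UNIV_2 fcoef_shear_flow[OF assms] norm_wavevec_axis power2_abs
         power_mult_distrib power_divide)
qed

lemma summable_Apow_summand_shear_flow:
  assumes decay: "rapid_decay b" and L: "L > 0"
  shows "Apow_summand L \<alpha> (shear_flow b L) summable_on UNIV"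
proof -
  define c where "c = kappa0 L"
  have "c > 0"
    using L by (simp add: c_def kappa0_def)
  obtain B where "B > 0" and B: "\<And>n. \<bar>b n\<bar> \<le> B"
    using rapid_decay_bounded[OF decay] by blast
  define g where "g n = B * (c ^ (2 * \<alpha>) * (\<bar>b n\<bar> * real n ^ (2 * \<alpha>)))" for n
  have "summable g"
    using decay unfolding rapid_decay_def g_def by (intro summable_mult) blast
  moreover have "g n \<ge> 0" for n
    using \<open>B > 0\<close> \<open>c > 0\<close> by (simp add: g_def)
  ultimately have majorant: "(\<lambda>k::int \<times> int. if snd k = 0 then g (nat \<bar>fst k\<bar>) else 0) summable_on UNIV"
    by (intro summable_on_axis)
  have "Apow_summand L \<alpha> (shear_flow b L) (m, 0) \<le> g (nat \<bar>m\<bar>)" for m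
  proof -
    define w :: real where "w = (if m = 0 then 1 else 1 / 2)"
    have "(b (nat \<bar>m\<bar>) * w)^2 = \<bar>b (nat \<bar>m\<bar>)\<bar> * \<bar>b (nat \<bar>m\<bar>)\<bar> * w^2"
      by (simp add: power_mult_distrib power2_eq_square)
    also have "\<dots> \<le> \<bar>b (nat \<bar>m\<bar>)\<bar> * B * 1"
      using B \<open>B > 0\<close> by (intro mult_mono) (auto simp: w_def power2_eq_square)
    finally have "(b (nat \<bar>m\<bar>) * w)^2 \<le> B * \<bar>b (nat \<bar>m\<bar>)\<bar>"
      by (simp add: mult.commute)
    then have "(c * real (nat \<bar>m\<bar>)) ^ (2 * \<alpha>) * (b (nat \<bar>m\<bar>) * w)^2
        \<le> (c * real (nat \<bar>m\<bar>)) ^ (2 * \<alpha>) * (B * \<bar>b (nat \<bar>m\<bar>)\<bar>)"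
      by (rule mult_left_mono) (use \<open>c > 0\<close> in simp)
    then show ?thesis
      by (simp add: Apow_summand_shear_flow[OF decay L] w_def c_def g_def power_mult_distrib mult_ac)
  qed
  then have "Apow_summand L \<alpha> (shear_flow b L) k \<le> (if snd k = 0 then g (nat \<bar>fst k\<bar>) else 0)" for k
    by (cases k) (auto simp: Apow_summand_shear_flow[OF decay L])
  then show ?thesis
    by (rule summable_on_comparison_test[OF majorant _ Apow_summand_nonneg[OF L]])
qed

lemma Apow_norm_sq_shear_flow_ge:
  assumes decay: "rapid_decay b" and L: "L > 0"
  shows "L^2 * ((kappa0 L * real n) ^ (2 * \<alpha>) * (b n / 2)^2) \<le> Apow_norm_sq L \<alpha> (shear_flow b L)"
proof -
  define w :: real where "w = (if n = 0 then 1 else 1 / 2)"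
  have "(b n)^2 * (1 / 4) \<le> (b n)^2 * w^2"
    by (rule mult_left_mono) (simp_all add: w_def power2_eq_square)
  then have "(b n / 2)^2 \<le> (b n * w)^2"
    by (simp add: power_divide power_mult_distrib)
  then have "(kappa0 L * real n) ^ (2 * \<alpha>) * (b n / 2)^2 \<le> Apow_summand L \<alpha> (shear_flow b L) (int n, 0)"
    using L by (simp add: Apow_summand_shear_flow[OF decay L] w_def kappa0_def mult_left_mono)
  also have "L^2 * \<dots> \<le> Apow_norm_sq L \<alpha> (shear_flow b L)"
    by (rule Apow_summand_le_Apow_norm_sq[OF L summable_Apow_summand_shear_flow[OF decay L]])
  finally show ?thesis
    using L by (simp add: mult_left_mono)
qed

lemma exp_cubic_dominates_exp_quadratic:
  fixes a K c0 \<sigma> :: real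
  assumes "a > 0" and "K > 0"
  obtains m :: nat where "c0 * exp (\<sigma> * real m ^ 2) < K * exp (a * real m ^ 3)"
proof -
  obtain m :: nat where m: "real m \<ge> (\<bar>\<sigma>\<bar> + \<bar>c0\<bar> / K + 1) / a + 1"
    using real_arch_simple by blast
  have "\<bar>c0\<bar> / K \<ge> 0"
    using \<open>K > 0\<close> by simp
  then have "(\<bar>\<sigma>\<bar> + \<bar>c0\<bar> / K + 1) / a \<ge> 0"
    using \<open>a > 0\<close> by simp
  then have "real m \<ge> 1"
    using m by linarith
  have "a * real m \<ge> a * ((\<bar>\<sigma>\<bar> + \<bar>c0\<bar> / K + 1) / a + 1)"
    using m \<open>a > 0\<close> by (intro mult_left_mono) auto
  also have "a * ((\<bar>\<sigma>\<bar> + \<bar>c0\<bar> / K + 1) / a + 1) = \<bar>\<sigma>\<bar> + \<bar>c0\<bar> / K + 1 + a"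
    using \<open>a > 0\<close> by (simp add: field_simps)
  finally have "a * real m \<ge> \<bar>\<sigma>\<bar> + \<bar>c0\<bar> / K + 1"
    using \<open>a > 0\<close> by linarith
  with \<open>real m \<ge> 1\<close> have "(a * real m - \<sigma>) * (real m * real m) \<ge> (\<bar>c0\<bar> / K + 1) * 1"
    using \<open>\<bar>c0\<bar> / K \<ge> 0\<close> mult_mono[of 1 "real m" 1 "real m"] by (intro mult_mono) auto
  then have "a * real m ^ 3 - \<sigma> * real m ^ 2 > \<bar>c0\<bar> / K"
    by (simp add: algebra_simps power2_eq_square power3_eq_cube)
  then have "exp (a * real m ^ 3 - \<sigma> * real m ^ 2) > \<bar>c0\<bar> / K"
    using exp_ge_add_one_self[of "a * real m ^ 3 - \<sigma> * real m ^ 2"] by linarith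
  then have "\<bar>c0\<bar> * exp (\<sigma> * real m ^ 2) < K * exp (a * real m ^ 3)"
    using \<open>K > 0\<close> by (simp add: exp_diff field_simps)
  moreover have "c0 * exp (\<sigma> * real m ^ 2) \<le> \<bar>c0\<bar> * exp (\<sigma> * real m ^ 2)"
    by (intro mult_right_mono) auto
  ultimately have "c0 * exp (\<sigma> * real m ^ 2) < K * exp (a * real m ^ 3)"
    by linarith
  then show ?thesis
    by (rule that)
qed

lemma decay_coeff_at_power_of_two:
  "real (2 ^ (m * m)) ^ (4 * m) * decay_coeff (2 ^ (m * m)) ^ 2
     = exp (2 * ln 2 * (2 - sqrt (ln 2)) * real m ^ 3)"
proof -
  define n :: nat where "n = 2 ^ (m * m)"
  have "real n > 0"
    by (simp add: n_def)
  have ln_n: "ln (real n) = (real m)^2 * ln 2"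
    by (simp add: n_def ln_realpow power2_eq_square)
  have sqrt_ln_n: "sqrt (ln (real n)) = real m * sqrt (ln 2)"
    by (simp only: ln_n real_sqrt_mult real_sqrt_abs abs_of_nat)
  have "real n ^ (4 * m) = exp (real (4 * m) * ln (real n))"
    using exp_of_nat_mult[of "4 * m" "ln (real n)"] \<open>real n > 0\<close> by simp
  moreover have "decay_coeff n ^ 2 = exp (real 2 * (- ln (real n) * sqrt (ln (real n))))"
    using \<open>real n > 0\<close> exp_of_nat_mult[of 2 "- ln (real n) * sqrt (ln (real n))"]
    by (simp add: decay_coeff_def)
  ultimately have "real n ^ (4 * m) * decay_coeff n ^ 2
      = exp (real (4 * m) * ln (real n) + real 2 * (- ln (real n) * sqrt (ln (real n))))"
    by (simp only: mult_exp_exp)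
  also have "\<dots> = exp (2 * ln 2 * (2 - sqrt (ln 2)) * real m ^ 3)"
    unfolding sqrt_ln_n unfolding ln_n by (simp add: power3_eq_cube power2_eq_square algebra_simps)
  finally show ?thesis
    unfolding n_def .
qed

lemma shear_flow_decay_coeff_notin_Cclass:
  assumes L: "L > 0" and "\<nu> > 0"
  shows "shear_flow decay_coeff L \<notin> Cclass L \<nu> \<sigma>"
proof
  assume "shear_flow decay_coeff L \<in> Cclass L \<nu> \<sigma>"
  then obtain c0 where c0: "\<And>\<alpha>. Apow_norm_sq L \<alpha> (shear_flow decay_coeff L) / (\<nu>^2 * kappa0 L ^ (2 * \<alpha>))
                                 \<le> c0 * exp (\<sigma> * (real \<alpha>)^2)"
    unfolding Cclass_def by blast
  define a where "a = 2 * ln 2 * (2 - sqrt (ln (2::real)))"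
  define K where "K = L^2 / (4 * \<nu>^2)"
  have "sqrt (ln (2::real)) < 2"
    using ln_2_less_1 by (smt (verit) real_sqrt_less_iff real_sqrt_four)
  then have "a > 0" and "K > 0"
    using L \<open>\<nu> > 0\<close> by (simp_all add: a_def K_def)
  then obtain m :: nat where m: "c0 * exp (4 * \<sigma> * real m ^ 2) < K * exp (a * real m ^ 3)"
    by (rule exp_cubic_dominates_exp_quadratic)
  define n :: nat where "n = 2 ^ (m * m)"
  have "kappa0 L > 0"
    using L by (simp add: kappa0_def)
  have "\<nu>^2 * kappa0 L ^ (2 * (2 * m)) * (K * exp (a * real m ^ 3))
      = L^2 * ((kappa0 L * real n) ^ (2 * (2 * m)) * (decay_coeff n / 2)^2)"
    using decay_coeff_at_power_of_two[of m] \<open>\<nu> > 0\<close>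
    by (simp add: a_def K_def n_def power_mult_distrib field_simps)
  also have "\<dots> \<le> Apow_norm_sq L (2 * m) (shear_flow decay_coeff L)"
    by (rule Apow_norm_sq_shear_flow_ge[OF rapid_decay_decay_coeff L])
  finally have "K * exp (a * real m ^ 3)
      \<le> Apow_norm_sq L (2 * m) (shear_flow decay_coeff L) / (\<nu>^2 * kappa0 L ^ (2 * (2 * m)))"
    using \<open>\<nu> > 0\<close> \<open>kappa0 L > 0\<close> by (simp add: pos_le_divide_eq mult.commute)
  also have "\<dots> \<le> c0 * exp (4 * \<sigma> * real m ^ 2)"
    using c0[of "2 * m"] by (simp add: power_mult_distrib mult_ac)
  finally show False
    using m by linarith
qed

theorem theorem10p1:
  fixes L \<nu> :: real
  assumes "L > 0" and "\<nu> > 0"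
  shows "(\<Union>\<sigma>\<in>{0<..}. Cclass L \<nu> \<sigma>) \<subset> smoothH L"
proof -
  have "(\<Union>\<sigma>\<in>{0<..}. Cclass L \<nu> \<sigma>) \<subseteq> smoothH L"
    by (auto simp: Cclass_def)
  moreover have "shear_flow decay_coeff L \<in> smoothH L"
    using rapid_decay_decay_coeff assms by (simp add: shear_flow_in_smoothH decay_coeff_def)
  moreover have "shear_flow decay_coeff L \<notin> (\<Union>\<sigma>\<in>{0<..}. Cclass L \<nu> \<sigma>)"
    using shear_flow_decay_coeff_notin_Cclass assms by blast
  ultimately show ?thesis
    by blast
qed

end
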